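(* Let $T$ be a theory extending $\mathsf{ACA}_0$ and let $\alpha$ be a primitive recursive well-ordering with $\mathrm{otyp}(\alpha)<|T|_{\mathsf{WF}}$. Then $T\vdash^{\Sigma^1_1}\mathsf{WF}(\alpha)$.
   Context: A theory is a set of sentences of the language of second-order arithmetic; $T+\psi$ denotes $T\cup\{\psi\}$. $\mathrm{otyp}$ denotes order type. For primitive recursive $\prec$, $\mathsf{WF}(\prec):=\forall X(\exists x\in X\to\exists x\in X\,\forall y\in X\,\neg(y\prec x))$; $|T|_{\mathsf{WF}}$ is the supremum of the order types of primitive recursive presentations $\prec$ of well-orderings with $T\vdash\mathsf{WF}(\prec)$. $T\vdash^{\Sigma^1_1}\varphi$ means there is a true (in the standard model) $\Sigma^1_1$ sentence $\psi$ with $T+\psi\vdash\varphi$. *)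

theory Defs
  imports Main
begin

datatype prc = PZero | PSucc | PProj nat nat | PComp prc "prc list" | PRec prc prc

text \<open>Standard semantics of a code (junk values on arity mismatch are irrelevant).\<close>
primrec peval :: "prc \<Rightarrow> nat list \<Rightarrow> nat" where
  "peval PZero xs = 0"
| "peval PSucc xs = (case xs of [] \<Rightarrow> 0 | x # _ \<Rightarrow> Suc x)"
| "peval (PProj n i) xs = xs ! i"
| "peval (PComp f gs) xs = peval f (map (\<lambda>g. peval g xs) gs)"
| "peval (PRec g h) xs = (case xs of [] \<Rightarrow> 0
     | x # ys \<Rightarrow> rec_nat (peval g ys) (\<lambda>k r. peval h (k # r # ys)) x)"

fun arity_ok :: "prc \<Rightarrow> nat \<Rightarrow> bool" where
  "arity_ok PZero n = (n = 0)"
| "arity_ok PSucc n = (n = 1)"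
| "arity_ok (PProj m i) n = (n = m \<and> i < m)"
| "arity_ok (PComp f gs) n = (arity_ok f (length gs) \<and> (\<forall>g\<in>set gs. arity_ok g n))"
| "arity_ok (PRec g h) n = (0 < n \<and> arity_ok g (n - 1) \<and> arity_ok h (Suc n))"

section \<open>Language of second-order arithmetic (de Bruijn indices, two sorts)\<close>

datatype trm = Var nat | Fn prc "trm list"

text \<open>Mem t j : t is an element of the set variable with index j.\<close>
datatype fm = Fls | Eq trm trm | Mem trm nat | Imp fm fm | All fm | SAll fm

definition Neg :: "fm \<Rightarrow> fm" where "Neg p = Imp p Fls"
definition Or :: "fm \<Rightarrow> fm \<Rightarrow> fm" where "Or p q = Imp (Neg p) q"
definition And :: "fm \<Rightarrow> fm \<Rightarrow> fm" where "And p q = Neg (Imp p (Neg q))"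
definition Iff :: "fm \<Rightarrow> fm \<Rightarrow> fm" where "Iff p q = And (Imp p q) (Imp q p)"
definition Ex :: "fm \<Rightarrow> fm" where "Ex p = Neg (All (Neg p))"
definition SEx :: "fm \<Rightarrow> fm" where "SEx p = Neg (SAll (Neg p))"

definition zero :: trm where "zero = Fn PZero []"
definition succ :: "trm \<Rightarrow> trm" where "succ t = Fn PSucc [t]"

primrec liftt :: "nat \<Rightarrow> trm \<Rightarrow> trm" where
  "liftt k (Var i) = Var (if i < k then i else Suc i)"
| "liftt k (Fn f ts) = Fn f (map (liftt k) ts)"

primrec liftf :: "nat \<Rightarrow> fm \<Rightarrow> fm" where
  "liftf k Fls = Fls"
| "liftf k (Eq t s) = Eq (liftt k t) (liftt k s)"
| "liftf k (Mem t j) = Mem (liftt k t) j"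
| "liftf k (Imp p q) = Imp (liftf k p) (liftf k q)"
| "liftf k (All p) = All (liftf (Suc k) p)"
| "liftf k (SAll p) = SAll (liftf k p)"

primrec liftS :: "nat \<Rightarrow> fm \<Rightarrow> fm" where
  "liftS k Fls = Fls"
| "liftS k (Eq t s) = Eq t s"
| "liftS k (Mem t j) = Mem t (if j < k then j else Suc j)"
| "liftS k (Imp p q) = Imp (liftS k p) (liftS k q)"
| "liftS k (All p) = All (liftS k p)"
| "liftS k (SAll p) = SAll (liftS (Suc k) p)"

primrec substt :: "nat \<Rightarrow> trm \<Rightarrow> trm \<Rightarrow> trm" where
  "substt k s (Var i) = (if i < k then Var i else if i = k then s else Var (i - 1))"
| "substt k s (Fn f ts) = Fn f (map (substt k s) ts)"

primrec substf :: "nat \<Rightarrow> trm \<Rightarrow> fm \<Rightarrow> fm" where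
  "substf k s Fls = Fls"
| "substf k s (Eq t u) = Eq (substt k s t) (substt k s u)"
| "substf k s (Mem t j) = Mem (substt k s t) j"
| "substf k s (Imp p q) = Imp (substf k s p) (substf k s q)"
| "substf k s (All p) = All (substf (Suc k) (liftt 0 s) p)"
| "substf k s (SAll p) = SAll (substf k s p)"

primrec substS :: "nat \<Rightarrow> nat \<Rightarrow> fm \<Rightarrow> fm" where
  "substS k j Fls = Fls"
| "substS k j (Eq t u) = Eq t u"
| "substS k j (Mem t i) = Mem t (if i < k then i else if i = k then j else i - 1)"
| "substS k j (Imp p q) = Imp (substS k j p) (substS k j q)"
| "substS k j (All p) = All (substS k j p)"
| "substS k j (SAll p) = SAll (substS (Suc k) (Suc j) p)"

primrec tfree_below :: "nat \<Rightarrow> trm \<Rightarrow> bool" where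
  "tfree_below k (Var i) = (i < k)"
| "tfree_below k (Fn f ts) = list_all (tfree_below k) ts"

primrec nfree_below :: "nat \<Rightarrow> fm \<Rightarrow> bool" where
  "nfree_below k Fls = True"
| "nfree_below k (Eq t s) = (tfree_below k t \<and> tfree_below k s)"
| "nfree_below k (Mem t j) = tfree_below k t"
| "nfree_below k (Imp p q) = (nfree_below k p \<and> nfree_below k q)"
| "nfree_below k (All p) = nfree_below (Suc k) p"
| "nfree_below k (SAll p) = nfree_below k p"

primrec sfree_below :: "nat \<Rightarrow> fm \<Rightarrow> bool" where
  "sfree_below k Fls = True"
| "sfree_below k (Eq t s) = True"
| "sfree_below k (Mem t j) = (j < k)"
| "sfree_below k (Imp p q) = (sfree_below k p \<and> sfree_below k q)"
| "sfree_below k (All p) = sfree_below k p"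
| "sfree_below k (SAll p) = sfree_below (Suc k) p"

definition sentence :: "fm \<Rightarrow> bool" where
  "sentence p \<longleftrightarrow> nfree_below 0 p \<and> sfree_below 0 p"

primrec arith :: "fm \<Rightarrow> bool" where
  "arith Fls = True"
| "arith (Eq t s) = True"
| "arith (Mem t j) = True"
| "arith (Imp p q) = (arith p \<and> arith q)"
| "arith (All p) = arith p"
| "arith (SAll p) = False"

definition sigma11 :: "fm \<Rightarrow> bool" where
  "sigma11 p \<longleftrightarrow> (\<exists>n q. arith q \<and> p = (SEx ^^ n) q)"

primrec evt :: "(nat \<Rightarrow> nat) \<Rightarrow> trm \<Rightarrow> nat" where
  "evt e (Var i) = e i"
| "evt e (Fn f ts) = peval f (map (evt e) ts)"

primrec sat :: "(nat \<Rightarrow> nat) \<Rightarrow> (nat \<Rightarrow> nat set) \<Rightarrow> fm \<Rightarrow> bool" where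
  "sat e S Fls = False"
| "sat e S (Eq t s) = (evt e t = evt e s)"
| "sat e S (Mem t j) = (evt e t \<in> S j)"
| "sat e S (Imp p q) = (sat e S p \<longrightarrow> sat e S q)"
| "sat e S (All p) = (\<forall>n. sat (case_nat n e) S p)"
| "sat e S (SAll p) = (\<forall>X. sat e (case_nat X S) p)"

definition std_true :: "fm \<Rightarrow> bool" where
  "std_true p \<longleftrightarrow> sat (\<lambda>_. 0) (\<lambda>_. {}) p"

text \<open>prv H p: p is derivable from the hypotheses H (intended: a set of sentences).\<close>
inductive prv :: "fm set \<Rightarrow> fm \<Rightarrow> bool" for H :: "fm set" where
  hyp: "p \<in> H \<Longrightarrow> prv H p"
| ax1: "prv H (Imp p (Imp q p))"
| ax2: "prv H (Imp (Imp p (Imp q r)) (Imp (Imp p q) (Imp p r)))"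
| ax3: "prv H (Imp (Neg (Neg p)) p)"
| mp: "prv H (Imp p q) \<Longrightarrow> prv H p \<Longrightarrow> prv H q"
| eq_refl: "prv H (Eq t t)"
| eq_subst: "prv H (Imp (Eq t s) (Imp (substf 0 t p) (substf 0 s p)))"
| all_inst: "prv H (Imp (All p) (substf 0 t p))"
| all_dist: "prv H (Imp (All (Imp (liftf 0 q) p)) (Imp q (All p)))"
| gen: "prv H p \<Longrightarrow> prv H (All p)"
| sall_inst: "prv H (Imp (SAll p) (substS 0 j p))"
| sall_dist: "prv H (Imp (SAll (Imp (liftS 0 q) p)) (Imp q (SAll p)))"
| sgen: "prv H p \<Longrightarrow> prv H (SAll p)"

definition vars :: "nat \<Rightarrow> trm list" where "vars n = map Var [0..<n]"

inductive aca_base :: "fm \<Rightarrow> bool" where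
  succ_ne: "aca_base (Neg (Eq (succ (Var 0)) zero))"
| succ_inj: "aca_base (Imp (Eq (succ (Var 0)) (succ (Var 1))) (Eq (Var 0) (Var 1)))"
| proj: "i < n \<Longrightarrow> aca_base (Eq (Fn (PProj n i) (vars n)) (Var i))"
| comp: "arity_ok (PComp f gs) m \<Longrightarrow>
     aca_base (Eq (Fn (PComp f gs) (vars m)) (Fn f (map (\<lambda>g. Fn g (vars m)) gs)))"
| rec0: "arity_ok (PRec g h) (Suc n) \<Longrightarrow>
     aca_base (Eq (Fn (PRec g h) (zero # vars n)) (Fn g (vars n)))"
| recS: "arity_ok (PRec g h) (Suc n) \<Longrightarrow>
     aca_base (Eq (Fn (PRec g h) (succ (Var n) # vars n))
                  (Fn h (Var n # Fn (PRec g h) (Var n # vars n) # vars n)))"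
| set_induct: "aca_base (Imp (And (Mem zero 0) (All (Imp (Mem (Var 0) 0) (Mem (succ (Var 0)) 0))))
                        (All (Mem (Var 0) 0)))"
| compr: "arith p \<Longrightarrow> aca_base (SEx (All (Iff (Mem (Var 0) 0) (liftS 0 p))))"

definition ACA0 :: "fm set" where
  "ACA0 = {c. \<exists>p n m. aca_base p \<and> c = (All ^^ n) ((SAll ^^ m) p) \<and> sentence c}"

definition prel :: "prc \<Rightarrow> nat rel" where
  "prel a = {(y, x). peval a [y, x] \<noteq> 0}"

definition pr_wellorder :: "prc \<Rightarrow> bool" where
  "pr_wellorder a \<longleftrightarrow> arity_ok a 2 \<and> strict_linear_order_on (Field (prel a)) (prel a) \<and> wf (prel a)"

text \<open>otyp(a) < otyp(b), compared via the library's strict embedding order on well-orders.\<close>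
definition otyp_less :: "prc \<Rightarrow> prc \<Rightarrow> bool" where
  "otyp_less a b \<longleftrightarrow>
     (prel a \<union> Id_on (Field (prel a)), prel b \<union> Id_on (Field (prel b))) \<in> ordLess"

text \<open>y < x is rendered as  peval a [y,x] ~= 0,  i.e. Neg (Eq (Fn a [y,x]) zero).\<close>
definition prec :: "prc \<Rightarrow> trm \<Rightarrow> trm \<Rightarrow> fm" where
  "prec a y x = Neg (Eq (Fn a [y, x]) zero)"

text \<open>WF(a) = AX X (EX x. x:X --> EX x. x:X & AX y. y:X --> ~ y < x).\<close>
definition WF :: "prc \<Rightarrow> fm" where
  "WF a = SAll (Imp (Ex (Mem (Var 0) 0))
                    (Ex (And (Mem (Var 0) 0)
                             (All (Imp (Mem (Var 0) 0) (Neg (prec a (Var 0) (Var 1))))))))"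

text \<open>otyp(a) < |T|_WF, where |T|_WF is the supremum of the order types of the
  primitive recursive well-orderings b with T |- WF(b).\<close>
definition below_WF_ordinal :: "prc \<Rightarrow> fm set \<Rightarrow> bool" where
  "below_WF_ordinal a T \<longleftrightarrow> (\<exists>b. pr_wellorder b \<and> prv T (WF b) \<and> otyp_less a b)"

definition prv_sigma11 :: "fm set \<Rightarrow> fm \<Rightarrow> bool" where
  "prv_sigma11 T p \<longleftrightarrow> (\<exists>\<psi>. sentence \<psi> \<and> sigma11 \<psi> \<and> std_true \<psi> \<and> prv (insert \<psi> T) p)"

end

theory Submission
  imports Defs "HOL-Library.Nat_Bijection"
begin

text \<open>Since \<open>otyp(a) < otyp(b)\<close>, some \<open>f\<close> maps \<open>a\<close>-smaller elements to \<open>b\<close>-smaller ones. Hence the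
  \<open>\<Sigma>\<^sup>1\<^sub>1\<close> sentence stating that some total relation \<open>F\<close> sends \<open>a\<close>-smaller arguments to \<open>b\<close>-smaller
  values is true, witnessed by the graph of \<open>f\<close>. From it and \<open>WF(b)\<close> one derives \<open>WF(a)\<close> using
  arithmetical comprehension only: if a nonempty \<open>X\<close> had no \<open>a\<close>-minimal element, the \<open>F\<close>-image \<open>Z\<close>
  of \<open>X\<close> would be nonempty, and a \<open>b\<close>-minimal element of \<open>Z\<close> would have a preimage in \<open>X\<close> whose
  \<open>a\<close>-predecessor in \<open>X\<close> is mapped strictly below it.\<close>

section \<open>Natural deduction with local assumptions\<close>

lemma prv_mono: "prv H p \<Longrightarrow> H \<subseteq> H' \<Longrightarrow> prv H' p"
  by (induction rule: prv.induct) (auto intro: prv.intros)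

lemma prv_imp_refl: "prv H (Imp p p)"
  using prv.mp[OF prv.mp[OF prv.ax2 prv.ax1] prv.ax1[of H p p]] .

text \<open>There is no generalisation rule for \<open>ctx_prv\<close> (the local assumptions may mention the
  variable), so the deduction theorem holds; quantifier introduction is derived for lifted
  contexts instead.\<close>

inductive ctx_prv :: "fm list \<Rightarrow> fm set \<Rightarrow> fm \<Rightarrow> bool" for G H where
  assm: "q \<in> set G \<Longrightarrow> ctx_prv G H q"
| from_prv: "prv H q \<Longrightarrow> ctx_prv G H q"
| mp: "ctx_prv G H (Imp p q) \<Longrightarrow> ctx_prv G H p \<Longrightarrow> ctx_prv G H q"

lemma ctx_prv_impI: "ctx_prv (p # G) H q \<Longrightarrow> ctx_prv G H (Imp p q)"
proof (induction rule: ctx_prv.induct)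
  case (assm q)
  show ?case
  proof (cases "q = p")
    case True
    then show ?thesis by (simp add: ctx_prv.from_prv prv_imp_refl)
  next
    case False
    with assm have "ctx_prv G H q" by (simp add: ctx_prv.assm)
    then show ?thesis by (rule ctx_prv.mp[OF ctx_prv.from_prv[OF prv.ax1]])
  qed
next
  case (from_prv q)
  then show ?case by (intro ctx_prv.from_prv prv.mp[OF prv.ax1])
next
  case (mp p' q)
  show ?case
    using ctx_prv.mp[OF ctx_prv.mp[OF ctx_prv.from_prv[OF prv.ax2] mp.IH(1)] mp.IH(2)] .
qed

lemma ctx_prv_weaken: "ctx_prv G H q \<Longrightarrow> set G \<subseteq> set G' \<Longrightarrow> ctx_prv G' H q"
  by (induction rule: ctx_prv.induct) (blast intro: ctx_prv.intros)+

lemma ctx_prv_Nil: "ctx_prv [] H q \<longleftrightarrow> prv H q"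
proof
  show "ctx_prv [] H q \<Longrightarrow> prv H q"
    by (induction rule: ctx_prv.induct) (simp, simp, metis prv.mp)
qed (rule ctx_prv.from_prv)

lemma ctx_prv_cut:
  assumes "ctx_prv G H p" and "ctx_prv (p # G) H q"
  shows "ctx_prv G H q"
  using ctx_prv.mp[OF ctx_prv_impI[OF assms(2)] assms(1)] .

lemma ctx_prv_negI: "ctx_prv (p # G) H Fls \<Longrightarrow> ctx_prv G H (Neg p)"
  unfolding Neg_def by (rule ctx_prv_impI)

lemma ctx_prv_negE: "ctx_prv G H (Neg p) \<Longrightarrow> ctx_prv G H p \<Longrightarrow> ctx_prv G H Fls"
  unfolding Neg_def by (rule ctx_prv.mp)

lemma ctx_prv_ccontr: "ctx_prv (Neg p # G) H Fls \<Longrightarrow> ctx_prv G H p"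
  by (rule ctx_prv.mp[OF ctx_prv.from_prv[OF prv.ax3] ctx_prv_negI])

lemma ctx_prv_FlsE: "ctx_prv G H Fls \<Longrightarrow> ctx_prv G H p"
  by (rule ctx_prv_ccontr, erule ctx_prv_weaken) auto

lemma ctx_prv_andI:
  assumes "ctx_prv G H p" and "ctx_prv G H q"
  shows "ctx_prv G H (And p q)"
proof -
  let ?G = "Imp p (Neg q) # G"
  have "ctx_prv ?G H (Imp p (Neg q))" by (rule ctx_prv.assm) simp
  moreover have "ctx_prv ?G H p" using assms(1) by (rule ctx_prv_weaken) auto
  ultimately have "ctx_prv ?G H (Neg q)" by (rule ctx_prv.mp)
  moreover have "ctx_prv ?G H q" using assms(2) by (rule ctx_prv_weaken) auto
  ultimately have "ctx_prv ?G H Fls" by (rule ctx_prv_negE)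
  then show ?thesis unfolding And_def by (rule ctx_prv_negI)
qed

lemma ctx_prv_andD1:
  assumes "ctx_prv G H (And p q)"
  shows "ctx_prv G H p"
proof (rule ctx_prv_ccontr)
  let ?G = "Neg p # G"
  have "ctx_prv (p # ?G) H Fls" by (rule ctx_prv_negE[of _ _ p]) (auto intro: ctx_prv.assm)
  then have "ctx_prv ?G H (Imp p (Neg q))" by (rule ctx_prv_impI[OF ctx_prv_FlsE])
  moreover have "ctx_prv ?G H (Neg (Imp p (Neg q)))"
    using assms unfolding And_def by (rule ctx_prv_weaken) auto
  ultimately show "ctx_prv ?G H Fls" using ctx_prv_negE by blast
qed

lemma ctx_prv_andD2:
  assumes "ctx_prv G H (And p q)"
  shows "ctx_prv G H q"
proof (rule ctx_prv_ccontr)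
  let ?G = "Neg q # G"
  have "ctx_prv ?G H (Imp p (Neg q))" by (intro ctx_prv_impI ctx_prv.assm) simp
  moreover have "ctx_prv ?G H (Neg (Imp p (Neg q)))"
    using assms unfolding And_def by (rule ctx_prv_weaken) auto
  ultimately show "ctx_prv ?G H Fls" using ctx_prv_negE by blast
qed

lemma ctx_prv_andE:
  assumes "ctx_prv G H (And p q)" and "ctx_prv (p # q # G) H r"
  shows "ctx_prv G H r"
proof -
  have "ctx_prv (q # G) H p" using ctx_prv_andD1[OF assms(1)] by (rule ctx_prv_weaken) auto
  then have "ctx_prv (q # G) H r" using assms(2) by (rule ctx_prv_cut)
  with ctx_prv_andD2[OF assms(1)] show ?thesis by (rule ctx_prv_cut)
qed

lemma ctx_prv_iffD1:
  assumes "ctx_prv G H (Iff p q)" and "ctx_prv G H p"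
  shows "ctx_prv G H q"
  using ctx_prv.mp[OF ctx_prv_andD1[OF assms(1)[unfolded Iff_def]] assms(2)] .

lemma ctx_prv_iffD2:
  assumes "ctx_prv G H (Iff p q)" and "ctx_prv G H q"
  shows "ctx_prv G H p"
  using ctx_prv.mp[OF ctx_prv_andD2[OF assms(1)[unfolded Iff_def]] assms(2)] .

fun imps :: "fm list \<Rightarrow> fm \<Rightarrow> fm" where
  "imps [] q = q"
| "imps (g # G) q = Imp g (imps G q)"

lemma ctx_prv_imps: "ctx_prv (G @ G') H q \<Longrightarrow> ctx_prv G' H (imps G q)"
proof (induction G arbitrary: G')
  case (Cons g G)
  have "ctx_prv (G @ g # G') H q" using Cons.prems by (rule ctx_prv_weaken) auto
  then show ?case by (simp add: Cons.IH ctx_prv_impI)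
qed simp

lemma prv_imps: "ctx_prv G H q \<Longrightarrow> prv H (imps G q)"
  using ctx_prv_imps[of G "[]"] by (simp add: ctx_prv_Nil)

lemma ctx_prv_impsD: "ctx_prv G' H (imps G q) \<Longrightarrow> set G \<subseteq> set G' \<Longrightarrow> ctx_prv G' H q"
proof (induction G)
  case (Cons g G)
  have "ctx_prv G' H (Imp g (imps G q))" using Cons.prems(1) by simp
  moreover have "ctx_prv G' H g" using Cons.prems(2) by (intro ctx_prv.assm) simp
  ultimately have "ctx_prv G' H (imps G q)" by (rule ctx_prv.mp)
  then show ?case using Cons.IH Cons.prems(2) by simp
qed simp

text \<open>\<open>L\<close> lifts a formula over the variable bound by \<open>Q\<close>; number and set quantifiers are both
  instances.\<close>

locale quantifier_calculus =
  fixes Q :: "fm \<Rightarrow> fm" and L :: "fm \<Rightarrow> fm"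
  assumes gen: "prv H p \<Longrightarrow> prv H (Q p)"
    and dist: "prv H (Imp (Q (Imp (L q) p)) (Imp q (Q p)))"
    and L_Imp: "L (Imp p q) = Imp (L p) (L q)"
    and L_Fls: "L Fls = Fls"
begin

lemma L_imps: "L (imps G q) = imps (map L G) (L q)"
  by (induction G) (simp_all add: L_Imp)

lemma L_Neg: "L (Neg p) = Neg (L p)"
  by (simp add: Neg_def L_Imp L_Fls)

lemma ctx_prv_Q_impsD:
  "ctx_prv G' H (Q (imps (map L G) B)) \<Longrightarrow> set G \<subseteq> set G' \<Longrightarrow> ctx_prv G' H (Q B)"
proof (induction G)
  case (Cons g G)
  have "ctx_prv G' H (Imp g (Q (imps (map L G) B)))"
    using ctx_prv.mp[OF ctx_prv.from_prv[OF dist] Cons.prems(1)[simplified]] .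
  moreover have "ctx_prv G' H g" using Cons.prems(2) by (intro ctx_prv.assm) simp
  ultimately have "ctx_prv G' H (Q (imps (map L G) B))" by (rule ctx_prv.mp)
  then show ?case using Cons.IH Cons.prems(2) by simp
qed simp

lemma ctx_prv_QI:
  assumes "ctx_prv (map L G) H B"
  shows "ctx_prv G H (Q B)"
proof -
  have "ctx_prv G H (Q (imps (map L G) B))" using ctx_prv.from_prv[OF gen[OF prv_imps[OF assms]]] .
  then show ?thesis by (rule ctx_prv_Q_impsD) simp
qed

text \<open>The dual quantifier \<open>Neg (Q (Neg B))\<close> is eliminated by contraposition: an instance of \<open>B\<close>
  refuting \<open>C\<close> would refute the generalisation \<open>Q (Neg B)\<close>.\<close>
lemma ctx_prv_dual_QE:
  assumes ex: "ctx_prv G H (Neg (Q (Neg B)))" and inst: "ctx_prv (B # map L G) H (L C)"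
  shows "ctx_prv G H C"
proof (rule ctx_prv_ccontr)
  let ?R = "imps G C"
  have B_R: "prv H (Imp B (L ?R))" using prv_imps[OF inst] by (simp add: L_imps)
  have pos: "ctx_prv [B, L (Neg ?R)] H (L ?R)"
    by (rule ctx_prv.mp[OF ctx_prv.from_prv[OF B_R] ctx_prv.assm]) simp
  have neg: "ctx_prv [B, L (Neg ?R)] H (Neg (L ?R))" by (rule ctx_prv.assm) (simp add: L_Neg)
  have "ctx_prv [] H (Imp (L (Neg ?R)) (Neg B))"
    using ctx_prv_negE[OF neg pos] by (intro ctx_prv_impI ctx_prv_negI)
  then have R_Q: "prv H (Imp (Neg ?R) (Q (Neg B)))"
    by (intro prv.mp[OF dist] gen) (simp add: ctx_prv_Nil)
  let ?G = "Neg C # G"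
  have C: "ctx_prv (?R # ?G) H C" by (rule ctx_prv_impsD[OF ctx_prv.assm]) auto
  have not_C: "ctx_prv (?R # ?G) H (Neg C)" by (rule ctx_prv.assm) simp
  have "ctx_prv ?G H (Neg ?R)" using ctx_prv_negE[OF not_C C] by (rule ctx_prv_negI)
  then have Q: "ctx_prv ?G H (Q (Neg B))" by (rule ctx_prv.mp[OF ctx_prv.from_prv[OF R_Q]])
  have not_Q: "ctx_prv ?G H (Neg (Q (Neg B)))" using ex by (rule ctx_prv_weaken) auto
  show "ctx_prv ?G H Fls" using ctx_prv_negE[OF not_Q Q] .
qed

end

lemma zero_liftt_substt [simp]: "liftt k zero = zero" "substt k s zero = zero"
  by (simp_all add: zero_def)

lemma liftf_connectives [simp]:
  "liftf k (Neg p) = Neg (liftf k p)"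
  "liftf k (And p q) = And (liftf k p) (liftf k q)"
  "liftf k (Iff p q) = Iff (liftf k p) (liftf k q)"
  "liftf k (Ex p) = Ex (liftf (Suc k) p)"
  "liftf k (SEx p) = SEx (liftf k p)"
  "liftf k (prec a y x) = prec a (liftt k y) (liftt k x)"
  by (simp_all add: Neg_def And_def Iff_def Ex_def SEx_def prec_def)

lemma liftS_connectives [simp]:
  "liftS k (Neg p) = Neg (liftS k p)"
  "liftS k (And p q) = And (liftS k p) (liftS k q)"
  "liftS k (Iff p q) = Iff (liftS k p) (liftS k q)"
  "liftS k (Ex p) = Ex (liftS k p)"
  "liftS k (SEx p) = SEx (liftS (Suc k) p)"
  "liftS k (prec a y x) = prec a y x"
  by (simp_all add: Neg_def And_def Iff_def Ex_def SEx_def prec_def)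

lemma substf_connectives [simp]:
  "substf k s (Neg p) = Neg (substf k s p)"
  "substf k s (And p q) = And (substf k s p) (substf k s q)"
  "substf k s (Iff p q) = Iff (substf k s p) (substf k s q)"
  "substf k s (Ex p) = Ex (substf (Suc k) (liftt 0 s) p)"
  "substf k s (SEx p) = SEx (substf k s p)"
  "substf k s (prec a y x) = prec a (substt k s y) (substt k s x)"
  by (simp_all add: Neg_def And_def Iff_def Ex_def SEx_def prec_def)

lemma substS_connectives [simp]:
  "substS k j (Neg p) = Neg (substS k j p)"
  "substS k j (And p q) = And (substS k j p) (substS k j q)"
  "substS k j (Iff p q) = Iff (substS k j p) (substS k j q)"
  "substS k j (Ex p) = Ex (substS k j p)"
  "substS k j (SEx p) = SEx (substS (Suc k) (Suc j) p)"
  "substS k j (prec a y x) = prec a y x"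
  by (simp_all add: Neg_def And_def Iff_def Ex_def SEx_def prec_def)

lemma ctx_prv_allE: "ctx_prv G H (All B) \<Longrightarrow> substf 0 t B = C \<Longrightarrow> ctx_prv G H C"
  using ctx_prv.mp[OF ctx_prv.from_prv[OF prv.all_inst]] by blast

lemma ctx_prv_sallE: "ctx_prv G H (SAll B) \<Longrightarrow> substS 0 j B = C \<Longrightarrow> ctx_prv G H C"
  using ctx_prv.mp[OF ctx_prv.from_prv[OF prv.sall_inst]] by blast

lemma ctx_prv_exI:
  assumes "ctx_prv G H C" and "substf 0 t B = C"
  shows "ctx_prv G H (Ex B)"
proof -
  have "ctx_prv (All (Neg B) # G) H (Neg C)"
    by (rule ctx_prv_allE[OF ctx_prv.assm[of "All (Neg B)"], where t=t]) (simp_all add: assms(2))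
  moreover have "ctx_prv (All (Neg B) # G) H C" using assms(1) by (rule ctx_prv_weaken) auto
  ultimately have "ctx_prv (All (Neg B) # G) H Fls" by (rule ctx_prv_negE)
  then show ?thesis unfolding Ex_def by (rule ctx_prv_negI)
qed

interpretation num_quant: quantifier_calculus All "liftf 0"
  by unfold_locales (auto intro: prv.gen prv.all_dist)

interpretation set_quant: quantifier_calculus SAll "liftS 0"
  by unfold_locales (auto intro: prv.sgen prv.sall_dist)

lemmas ctx_prv_allI = num_quant.ctx_prv_QI
lemmas ctx_prv_sallI = set_quant.ctx_prv_QI

lemma ctx_prv_exE:
  "ctx_prv G H (Ex B) \<Longrightarrow> ctx_prv (B # map (liftf 0) G) H (liftf 0 C) \<Longrightarrow> ctx_prv G H C"
  unfolding Ex_def by (rule num_quant.ctx_prv_dual_QE)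

lemma ctx_prv_sexE:
  "ctx_prv G H (SEx B) \<Longrightarrow> ctx_prv (B # map (liftS 0) G) H (liftS 0 C) \<Longrightarrow> ctx_prv G H C"
  unfolding SEx_def by (rule set_quant.ctx_prv_dual_QE)

section \<open>The \<open>\<Sigma>\<^sup>1\<^sub>1\<close> sentence asserting an order-preserving map\<close>

definition pr_add :: prc where
  "pr_add = PRec (PProj 1 0) (PComp PSucc [PProj 3 1])"

definition pr_triangle :: prc where
  "pr_triangle = PRec PZero (PComp pr_add [PProj 2 1, PComp PSucc [PProj 2 0]])"

definition pr_pair :: prc where
  "pr_pair = PComp pr_add [PComp pr_triangle [PComp pr_add [PProj 2 0, PProj 2 1]], PProj 2 0]"

lemma peval_pr_add [simp]: "peval pr_add [x, y] = x + y"
  by (induction x) (simp_all add: pr_add_def)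

lemma peval_pr_triangle [simp]: "peval pr_triangle [k] = triangle k"
  by (induction k) (simp_all add: pr_triangle_def)

lemma peval_pr_pair [simp]: "peval pr_pair [n, m] = prod_encode (n, m)"
  by (simp add: pr_pair_def prod_encode_def)

text \<open>A set variable \<open>k\<close> codes a binary relation through \<open>prod_encode\<close>.
  In \<open>monotone_fm a b k\<close> the bound variables 3, 2, 1, 0 are \<open>x, y, u, v\<close>:
  \<open>(x, u) \<in> k \<and> (y, v) \<in> k \<and> x <\<^sub>a y \<longrightarrow> u <\<^sub>b v\<close>.
  In \<open>image_fm\<close> the set variable 0 is the image of set 1 under the relation 2.\<close>

abbreviation pair_in :: "trm \<Rightarrow> trm \<Rightarrow> nat \<Rightarrow> fm" where
  "pair_in t s k \<equiv> Mem (Fn pr_pair [t, s]) k"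

abbreviation total_fm :: "nat \<Rightarrow> fm" where
  "total_fm k \<equiv> All (Ex (pair_in (Var 1) (Var 0) k))"

abbreviation monotone_fm :: "prc \<Rightarrow> prc \<Rightarrow> nat \<Rightarrow> fm" where
  "monotone_fm a b k \<equiv> All (All (All (All (Imp (pair_in (Var 3) (Var 1) k)
     (Imp (pair_in (Var 2) (Var 0) k) (Imp (prec a (Var 3) (Var 2)) (prec b (Var 1) (Var 0))))))))"

abbreviation image_fm :: fm where
  "image_fm \<equiv> All (Iff (Mem (Var 0) 0) (Ex (And (Mem (Var 0) 1) (pair_in (Var 0) (Var 1) 2))))"

abbreviation minimal_fm :: "prc \<Rightarrow> trm \<Rightarrow> nat \<Rightarrow> fm" where
  "minimal_fm a t k \<equiv> All (Imp (Mem (Var 0) k) (Neg (prec a (Var 0) t)))"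

abbreviation minimal_elem :: "prc \<Rightarrow> nat \<Rightarrow> fm" where
  "minimal_elem a k \<equiv> And (Mem (Var 0) k) (minimal_fm a (Var 1) k)"

definition embedding_sentence :: "prc \<Rightarrow> prc \<Rightarrow> fm" where
  "embedding_sentence a b = SEx (And (total_fm 0) (monotone_fm a b 0))"

text \<open>With numerals unfolded into \<open>Suc\<close>, simp evaluates the index arithmetic of de Bruijn
  substitution.\<close>

declare eval_nat_numeral [simp]

lemma ctx_prv_image_memI:
  assumes "ctx_prv G H image_fm" and "ctx_prv G H (Mem (Var x) 1)"
    and "ctx_prv G H (pair_in (Var x) (Var y) 2)"
  shows "ctx_prv G H (Mem (Var y) 0)"
proof -
  let ?E = "Ex (And (Mem (Var 0) 1) (pair_in (Var 0) (Var (Suc y)) 2))"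
  have "ctx_prv G H (Iff (Mem (Var y) 0) ?E)"
    by (rule ctx_prv_allE[OF assms(1), where t="Var y"]) simp
  moreover have "ctx_prv G H ?E"
    by (rule ctx_prv_exI[OF ctx_prv_andI[OF assms(2,3)], where t="Var x"]) simp
  ultimately show ?thesis by (rule ctx_prv_iffD2)
qed

lemma ctx_prv_monotoneD:
  assumes "ctx_prv G H (monotone_fm a b k)"
    and "ctx_prv G H (pair_in (Var x) (Var u) k)" and "ctx_prv G H (pair_in (Var y) (Var v) k)"
    and "ctx_prv G H (prec a (Var x) (Var y))"
  shows "ctx_prv G H (prec b (Var u) (Var v))"
proof -
  have "ctx_prv G H (Imp (pair_in (Var x) (Var u) k)
      (Imp (pair_in (Var y) (Var v) k) (Imp (prec a (Var x) (Var y)) (prec b (Var u) (Var v)))))"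
    by (rule ctx_prv_allE[where t="Var v"], rule ctx_prv_allE[where t="Var u"],
        rule ctx_prv_allE[where t="Var y"], rule ctx_prv_allE[OF assms(1), where t="Var x"]) simp+
  then show ?thesis
    by (rule ctx_prv.mp[OF ctx_prv.mp[OF ctx_prv.mp[OF _ assms(2)] assms(3)] assms(4)])
qed

section \<open>Deriving \<open>WF(a)\<close> from \<open>WF(b)\<close>\<close>

text \<open>In the following derivations \<open>\<Gamma>\<close> collects hypotheses without free number variables,
  so that it is unchanged by the lifting in \<open>ctx_prv_exE\<close> and \<open>ctx_prv_allI\<close>; \<open>L\<close> holds
  the local ones.\<close>

lemma preimage_predecessor_absurd:
  assumes closed: "map (liftf 0) \<Gamma> = \<Gamma>"
    and global: "{image_fm, monotone_fm a b 2, total_fm 2} \<subseteq> set \<Gamma>"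
    and local: "{Mem (Var y) 1, prec a (Var y) (Var x), pair_in (Var x) (Var u) 2,
                 minimal_fm b (Var (Suc u)) 0} \<subseteq> set L"
  shows "ctx_prv (L @ \<Gamma>) H Fls"
proof -
  let ?G = "pair_in (Var (Suc y)) (Var 0) 2 # map (liftf 0) L @ \<Gamma>"
  have lifted: "ctx_prv ?G H (liftf 0 p)" if "p \<in> set L \<union> set \<Gamma>" for p
  proof -
    have "liftf 0 p \<in> set (map (liftf 0) (L @ \<Gamma>))" using that by auto
    then show ?thesis using closed by (intro ctx_prv.assm) simp
  qed
  have pair_y: "ctx_prv ?G H (pair_in (Var (Suc y)) (Var 0) 2)" by (rule ctx_prv.assm) simp
  have smaller: "ctx_prv ?G H (prec b (Var 0) (Var (Suc u)))"
  proof (rule ctx_prv_monotoneD[OF _ pair_y])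
    show "ctx_prv ?G H (monotone_fm a b 2)" using lifted[of "monotone_fm a b 2"] global by simp
    show "ctx_prv ?G H (pair_in (Var (Suc x)) (Var (Suc u)) 2)"
      using lifted[of "pair_in (Var x) (Var u) 2"] local by simp
    show "ctx_prv ?G H (prec a (Var (Suc y)) (Var (Suc x)))"
      using lifted[of "prec a (Var y) (Var x)"] local by simp
  qed
  have in_image: "ctx_prv ?G H (Mem (Var 0) 0)"
  proof (rule ctx_prv_image_memI[OF _ _ pair_y])
    show "ctx_prv ?G H image_fm" using lifted[of image_fm] global by simp
    show "ctx_prv ?G H (Mem (Var (Suc y)) 1)" using lifted[of "Mem (Var y) 1"] local by simp
  qed
  have "ctx_prv ?G H (minimal_fm b (Var (Suc (Suc u))) 0)"
    using lifted[of "minimal_fm b (Var (Suc u)) 0"] local by simp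
  then have "ctx_prv ?G H (Imp (Mem (Var 0) 0) (Neg (prec b (Var 0) (Var (Suc u)))))"
    by (rule ctx_prv_allE[where t="Var 0"]) simp
  then have "ctx_prv ?G H Fls" by (rule ctx_prv_negE[OF ctx_prv.mp[OF _ in_image] smaller])
  then have "ctx_prv (pair_in (Var (Suc y)) (Var 0) 2 # map (liftf 0) (L @ \<Gamma>)) H (liftf 0 Fls)"
    using closed by simp
  moreover have "ctx_prv (L @ \<Gamma>) H (Ex (pair_in (Var (Suc y)) (Var 0) 2))"
    by (rule ctx_prv_allE[OF ctx_prv.assm[of "total_fm 2"], where t="Var y"]) 
      (use global in simp_all)
  ultimately show ?thesis by (rule ctx_prv_exE[rotated])
qed

lemma minimal_image_absurd:
  assumes closed: "map (liftf 0) \<Gamma> = \<Gamma>"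
    and global: "{image_fm, monotone_fm a b 2, total_fm 2, Neg (Ex (minimal_elem a 1))} \<subseteq> set \<Gamma>"
    and local: "{Mem (Var u) 0, minimal_fm b (Var (Suc u)) 0} \<subseteq> set L"
  shows "ctx_prv (L @ \<Gamma>) H Fls"
proof -
  let ?P = "And (Mem (Var 0) 1) (pair_in (Var 0) (Var (Suc u)) 2)"
  have "ctx_prv (L @ \<Gamma>) H (Iff (Mem (Var u) 0) (Ex ?P))"
    by (rule ctx_prv_allE[OF ctx_prv.assm[of image_fm], where t="Var u"]) 
      (use global in simp_all)
  moreover have "ctx_prv (L @ \<Gamma>) H (Mem (Var u) 0)" by (rule ctx_prv.assm) (use local in simp)
  ultimately have preimage: "ctx_prv (L @ \<Gamma>) H (Ex ?P)" by (rule ctx_prv_iffD1)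
  let ?L = "Mem (Var 0) 1 # pair_in (Var 0) (Var (Suc u)) 2 # ?P # map (liftf 0) L"
  have "liftf 0 (liftf 0 (minimal_fm b (Var (Suc u)) 0)) \<in> set (map (liftf 0) (map (liftf 0) L))"
    unfolding set_map by (intro imageI) (use local in simp)
  then have "ctx_prv ((prec a (Var 0) (Var 1) # Mem (Var 0) 1 # map (liftf 0) ?L) @ \<Gamma>) H Fls"
    by (intro preimage_predecessor_absurd[OF closed, of a b 0 1 "Suc (Suc u)"]) (use global in auto)
  then have "ctx_prv (map (liftf 0) (?L @ \<Gamma>)) H
      (Imp (Mem (Var 0) 1) (Neg (prec a (Var 0) (Var 1))))"
    using closed by (intro ctx_prv_impI ctx_prv_negI) simp
  then have "ctx_prv (?L @ \<Gamma>) H (minimal_elem a 1)"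
    by (intro ctx_prv_andI ctx_prv_allI) (simp add: ctx_prv.assm)
  then have "ctx_prv (?L @ \<Gamma>) H (Ex (minimal_elem a 1))"
    by (rule ctx_prv_exI[where t="Var 0"]) simp
  moreover have "ctx_prv (?L @ \<Gamma>) H (Neg (Ex (minimal_elem a 1)))"
    by (rule ctx_prv.assm) (use global in simp)
  ultimately have "ctx_prv (?L @ \<Gamma>) H Fls" by (rule ctx_prv_negE[rotated])
  then have "ctx_prv (?P # map (liftf 0) (L @ \<Gamma>)) H (liftf 0 Fls)"
    using ctx_prv_andE[OF ctx_prv.assm[of ?P]] closed by simp
  with preimage show ?thesis by (rule ctx_prv_exE)
qed

lemma ctx_prv_image_nonempty:
  assumes closed: "map (liftf 0) \<Gamma> = \<Gamma>"
    and global: "{image_fm, total_fm 2, Ex (Mem (Var 0) 1)} \<subseteq> set \<Gamma>"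
  shows "ctx_prv \<Gamma> H (Ex (Mem (Var 0) 0))"
proof -
  let ?G = "pair_in (Var 1) (Var 0) 2 # Mem (Var 1) 1 # \<Gamma>"
  have "ctx_prv ?G H (Mem (Var 0) 0)"
    by (rule ctx_prv_image_memI[of _ _ 1]) (use global in \<open>simp_all add: ctx_prv.assm\<close>)
  then have "ctx_prv ?G H (Ex (Mem (Var 0) 0))" by (rule ctx_prv_exI[where t="Var 0"]) simp
  then have inner: "ctx_prv (pair_in (Var 1) (Var 0) 2 # map (liftf 0) (Mem (Var 0) 1 # \<Gamma>)) H
      (liftf 0 (Ex (Mem (Var 0) 0)))"
    using closed by simp
  have "ctx_prv (Mem (Var 0) 1 # \<Gamma>) H (Ex (pair_in (Var 1) (Var 0) 2))"
    by (rule ctx_prv_allE[OF ctx_prv.assm[of "total_fm 2"], where t="Var 0"]) 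
      (use global in simp_all)
  then have "ctx_prv (Mem (Var 0) 1 # map (liftf 0) \<Gamma>) H (liftf 0 (Ex (Mem (Var 0) 0)))"
    using ctx_prv_exE[OF _ inner] closed by simp
  moreover have "ctx_prv \<Gamma> H (Ex (Mem (Var 0) 1))" by (rule ctx_prv.assm) (use global in simp)
  ultimately show ?thesis by (rule ctx_prv_exE[rotated])
qed

lemma nonempty_without_minimal_absurd:
  assumes closed: "map (liftf 0) \<Gamma> = \<Gamma>"
    and global: "{image_fm, monotone_fm a b 2, total_fm 2, Neg (Ex (minimal_elem a 1)),
                  Ex (Mem (Var 0) 1)} \<subseteq> set \<Gamma>"
    and wf: "prv H (WF b)"
  shows "ctx_prv \<Gamma> H Fls"
proof -
  have "ctx_prv \<Gamma> H (Imp (Ex (Mem (Var 0) 0)) (Ex (minimal_elem b 0)))"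
    by (rule ctx_prv_sallE[OF ctx_prv.from_prv[OF wf[unfolded WF_def]], where j=0]) simp
  then have minimal: "ctx_prv \<Gamma> H (Ex (minimal_elem b 0))"
    by (rule ctx_prv.mp) (rule ctx_prv_image_nonempty[OF closed], use global in simp)
  have "ctx_prv ([Mem (Var 0) 0, minimal_fm b (Var (Suc 0)) 0, minimal_elem b 0] @ \<Gamma>) H Fls"
    by (rule minimal_image_absurd[OF closed, of a b 0]) 
      (use global in simp_all)
  then have "ctx_prv (minimal_elem b 0 # map (liftf 0) \<Gamma>) H (liftf 0 Fls)"
    using ctx_prv_andE[OF ctx_prv.assm[of "minimal_elem b 0"]] closed by simp
  with minimal show ?thesis by (rule ctx_prv_exE)
qed

lemma prv_WF_of_embedding_sentence:
  assumes emb: "embedding_sentence a b \<in> H" and wf: "prv H (WF b)"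
    and compr: "prv H (SAll (SAll (SEx image_fm)))"
  shows "prv H (WF a)"
proof -
  let ?F = "And (total_fm 1) (monotone_fm a b 1)"
  let ?G = "[Neg (Ex (minimal_elem a 0)), Ex (Mem (Var 0) 0), ?F]"
  have "ctx_prv (image_fm # map (liftS 0) (total_fm 1 # monotone_fm a b 1 # ?G)) H Fls"
    by (rule nonempty_without_minimal_absurd[OF _ _ wf, of _ a]) simp_all
  moreover have "ctx_prv (total_fm 1 # monotone_fm a b 1 # ?G) H (SEx image_fm)"
    by (rule ctx_prv_sallE[where j=0], rule ctx_prv_sallE[OF ctx_prv.from_prv[OF compr], where j=1])
      simp+
  ultimately have "ctx_prv (total_fm 1 # monotone_fm a b 1 # ?G) H Fls" using ctx_prv_sexE by simp
  then have "ctx_prv ?G H Fls" using ctx_prv_andE[OF ctx_prv.assm[of ?F]] by simp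
  then have "ctx_prv [?F] H (Imp (Ex (Mem (Var 0) 0)) (Ex (minimal_elem a 0)))"
    by (rule ctx_prv_impI[OF ctx_prv_ccontr])
  then have "ctx_prv (map (liftS 0) [And (total_fm 0) (monotone_fm a b 0)]) H
      (Imp (Ex (Mem (Var 0) 0)) (Ex (minimal_elem a 0)))"
    by simp
  then have "ctx_prv [And (total_fm 0) (monotone_fm a b 0)] H (WF a)"
    unfolding WF_def by (rule ctx_prv_sallI)
  then have "ctx_prv (And (total_fm 0) (monotone_fm a b 0) # map (liftS 0) []) H (liftS 0 (WF a))"
    by (simp add: WF_def)
  then have "ctx_prv [] H (WF a)"
    by (rule ctx_prv_sexE[OF ctx_prv.from_prv[OF prv.hyp[OF emb[unfolded embedding_sentence_def]]]])
  then show ?thesis by (simp add: ctx_prv_Nil)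
qed

lemma image_comprehension_in_ACA0: "SAll (SAll (SEx image_fm)) \<in> ACA0"
proof -
  have "aca_base (SEx (All (Iff (Mem (Var 0) 0)
      (liftS 0 (Ex (And (Mem (Var 0) 0) (pair_in (Var 0) (Var 1) 1)))))))"
    by (rule aca_base.compr) (simp add: Neg_def And_def Ex_def)
  then show ?thesis
    unfolding ACA0_def
    by - (rule CollectI, rule exI[of _ "SEx image_fm"], rule exI[of _ 0], rule exI[of _ 2],
      simp add: sentence_def Neg_def And_def Iff_def Ex_def SEx_def)
qed

lemma sat_connectives [simp]:
  "sat e S (Neg p) = (\<not> sat e S p)"
  "sat e S (And p q) = (sat e S p \<and> sat e S q)"
  "sat e S (Iff p q) = (sat e S p = sat e S q)"
  "sat e S (Ex p) = (\<exists>n. sat (case_nat n e) S p)"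
  "sat e S (SEx p) = (\<exists>X. sat e (case_nat X S) p)"
  "sat e S (prec a y x) = (peval a [evt e y, evt e x] \<noteq> 0)"
  by (auto simp: Neg_def And_def Iff_def Ex_def SEx_def prec_def zero_def)

lemma std_true_embedding_sentence:
  assumes "\<And>x y. (y, x) \<in> prel a \<Longrightarrow> (f y, f x) \<in> prel b"
  shows "std_true (embedding_sentence a b)"
proof -
  let ?X = "range (\<lambda>n. prod_encode (n, f n))"
  have "sat e (case_nat ?X S) (total_fm 0)" for e S by (auto simp: image_iff)
  moreover have "sat e (case_nat ?X S) (monotone_fm a b 0)" for e S
    using assms by (auto simp: prel_def)
  ultimately show ?thesis
    unfolding std_true_def embedding_sentence_def sat_connectives(2,5) by blast
qed

lemma sentence_embedding_sentence: "sentence (embedding_sentence a b)"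
  by (simp add: embedding_sentence_def sentence_def Neg_def And_def Ex_def SEx_def prec_def
      zero_def)

lemma sigma11_embedding_sentence: "sigma11 (embedding_sentence a b)"
  unfolding sigma11_def embedding_sentence_def
  by (rule exI[of _ 1], rule exI[of _ "And (total_fm 0) (monotone_fm a b 0)"])
    (simp add: Neg_def And_def Ex_def prec_def)

lemma otyp_less_strict_embedding:
  assumes "pr_wellorder a" and "otyp_less a b"
  obtains f where "\<And>x y. (y, x) \<in> prel a \<Longrightarrow> (f y, f x) \<in> prel b"
proof -
  let ?ra = "prel a \<union> Id_on (Field (prel a))"
  let ?rb = "prel b \<union> Id_on (Field (prel b))"
  obtain f where wo: "Well_order ?ra" and em: "embed ?ra ?rb f"
    using assms(2) unfolding otyp_less_def ordLess_def embedS_def by blast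
  have "(f y, f x) \<in> prel b" if yx: "(y, x) \<in> prel a" for x y
  proof -
    have rb: "(f y, f x) \<in> ?rb" using embed_compat[OF em] yx unfolding compat_def by blast
    have "wf (prel a)" using assms(1) unfolding pr_wellorder_def by blast
    then have "y \<noteq> x" using yx by auto
    moreover have "x \<in> Field ?ra" "y \<in> Field ?ra" using yx by (auto simp: Field_def)
    ultimately have "f y \<noteq> f x" using embed_inj_on[OF wo em] unfolding inj_on_def by blast
    then show ?thesis using rb by auto
  qed
  then show thesis by (rule that)
qed

theorem mainTheorem6:
  fixes T :: "fm set" and a :: prc
  assumes "\<forall>p\<in>T. sentence p"
    and "\<forall>p\<in>ACA0. prv T p"
    and "pr_wellorder a"
    and "below_WF_ordinal a T"
  shows "prv_sigma11 T (WF a)"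
proof -
  obtain b where wf_b: "prv T (WF b)" and less: "otyp_less a b"
    using assms(4) unfolding below_WF_ordinal_def by blast
  obtain f where "\<And>x y. (y, x) \<in> prel a \<Longrightarrow> (f y, f x) \<in> prel b"
    using otyp_less_strict_embedding[OF assms(3) less] by blast
  then have true: "std_true (embedding_sentence a b)" by (rule std_true_embedding_sentence)
  let ?T = "insert (embedding_sentence a b) T"
  have "prv ?T (WF b)" using wf_b by (rule prv_mono) blast
  moreover have "prv ?T (SAll (SAll (SEx image_fm)))"
    using assms(2) image_comprehension_in_ACA0 by (intro prv_mono[OF _ subset_insertI]) blast
  ultimately have "prv ?T (WF a)" by (rule prv_WF_of_embedding_sentence[OF insertI1])
  then show ?thesis
    unfolding prv_sigma11_def
    using true sentence_embedding_sentence sigma11_embedding_sentence by (intro exI conjI)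
qed

end
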